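(* Let $A_1,\dots,A_m\in\mathbb{S}^n$ be linearly independent and $b\in\mathbb{R}^m$. Then Assumption 1(a) holds for all $p$ such that $\mathcal{M}_p$ is non-empty if and only if every $X\in\mathcal{C}$ is primal non-degenerate.
   Context: $\mathbb{S}^n$: real symmetric $n\times n$ matrices; $\langle U,V\rangle=\operatorname{tr}(U^\top V)$; $\mathcal{A}:\mathbb{S}^n\to\mathbb{R}^m$, $\mathcal{A}(X)_i=\langle A_i,X\rangle$. $\mathcal{C}=\{X\in\mathbb{S}^n:\mathcal{A}(X)=b,\ X\succeq0\}$; $\mathcal{M}_p=\{Y\in\mathbb{R}^{n\times p}:\mathcal{A}(YY^\top)=b\}$. Assumption 1(a) for $p$: $A_1Y,\dots,A_mY$ are linearly independent in $\mathbb{R}^{n\times p}$ for all $Y\in\mathcal{M}_p$. A matrix $X$ is primal non-degenerate if $X\in\mathcal{C}$ and $T_X+\ker\mathcal{A}=\mathbb{S}^n$, where $T_X$ is the tangent space at $X$ to the manifold of symmetric $n\times n$ matrices of rank $r=\operatorname{rank}(X)$, embedded in $\mathbb{S}^n$. *)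

theory Defs
  imports "HOL-Analysis.Analysis"
begin

definition sym_mat :: "real^'n^'n \<Rightarrow> bool" where
  "sym_mat X \<longleftrightarrow> transpose X = X"

definition frob :: "real^'n^'n \<Rightarrow> real^'n^'n \<Rightarrow> real" where
  "frob U V = trace (transpose U ** V)"

definition psd :: "real^'n^'n \<Rightarrow> bool" where
  "psd X \<longleftrightarrow> sym_mat X \<and> (\<forall>v. 0 \<le> v \<bullet> (X *v v))"

definition feasible_set :: "(nat \<Rightarrow> real^'n^'n) \<Rightarrow> nat \<Rightarrow> (nat \<Rightarrow> real) \<Rightarrow> (real^'n^'n) set" where
  "feasible_set A m b = {X. (\<forall>i<m. frob (A i) X = b i) \<and> psd X}"

text \<open>Y in R^{n x p} represented by its p columns Y 0, ..., Y (p-1); Y Y^T.\<close>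
definition YYt :: "nat \<Rightarrow> (nat \<Rightarrow> real^'n) \<Rightarrow> real^'n^'n" where
  "YYt p Y = (\<Sum>j<p. (\<chi> a c. Y j $ a * Y j $ c))"

definition Mp :: "(nat \<Rightarrow> real^'n^'n) \<Rightarrow> nat \<Rightarrow> (nat \<Rightarrow> real) \<Rightarrow> nat \<Rightarrow> (nat \<Rightarrow> real^'n) set" where
  "Mp A m b p = {Y. (\<forall>j\<ge>p. Y j = 0) \<and> (\<forall>i<m. frob (A i) (YYt p Y) = b i)}"

definition lin_indep_mats :: "(nat \<Rightarrow> real^'n^'n) \<Rightarrow> nat \<Rightarrow> bool" where
  "lin_indep_mats A m \<longleftrightarrow>
     (\<forall>c. (\<Sum>i<m. c i *\<^sub>R A i) = 0 \<longrightarrow> (\<forall>i<m. c i = 0))"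

text \<open>Assumption 1(a) for p: A_1 Y, ..., A_m Y linearly independent in R^{n x p}
  for all Y in M_p (the j-th column of A_i Y is A_i *v Y j).\<close>
definition assumption1a :: "(nat \<Rightarrow> real^'n^'n) \<Rightarrow> nat \<Rightarrow> (nat \<Rightarrow> real) \<Rightarrow> nat \<Rightarrow> bool" where
  "assumption1a A m b p \<longleftrightarrow>
     (\<forall>Y \<in> Mp A m b p. \<forall>c.
        (\<forall>j<p. (\<Sum>i<m. c i *\<^sub>R (A i *v Y j)) = 0) \<longrightarrow> (\<forall>i<m. c i = 0))"

definition sym_rank :: "nat \<Rightarrow> (real^'n^'n) set" where
  "sym_rank r = {X. sym_mat X \<and> rank X = r}"

definition tangent_space :: "real^'n^'n \<Rightarrow> (real^'n^'n) set" where
  "tangent_space X = {V. \<exists>\<gamma> e. e > 0 \<and> \<gamma> 0 = X \<and>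
       (\<forall>t. \<bar>t\<bar> < e \<longrightarrow> \<gamma> t \<in> sym_rank (rank X)) \<and>
       (\<gamma> has_vector_derivative V) (at 0)}"

definition primal_nondegenerate :: "(nat \<Rightarrow> real^'n^'n) \<Rightarrow> nat \<Rightarrow> (nat \<Rightarrow> real) \<Rightarrow> real^'n^'n \<Rightarrow> bool" where
  "primal_nondegenerate A m b X \<longleftrightarrow> X \<in> feasible_set A m b \<and>
     (\<forall>Z. sym_mat Z \<longrightarrow> (\<exists>T K. T \<in> tangent_space X \<and> sym_mat K \<and>
          (\<forall>i<m. frob (A i) K = 0) \<and> Z = T + K))"

end

theory Submission
  imports Defs
begin

text \<open>
  Both sides are equivalent to the linear independence of \<open>A\<^sub>1 X, \<dots>, A\<^sub>m X\<close> for every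
  feasible \<open>X\<close>. A feasible \<open>X\<close> is positive semidefinite, hence a Gram matrix \<open>Y Y\<^sup>T\<close> with
  \<open>Y \<in> M\<^sub>p\<close>, and for \<open>S = \<Sum> c\<^sub>i A\<^sub>i\<close> one has \<open>S X = 0\<close> iff \<open>S Y = 0\<close>; this is Assumption 1(a).

  The curves \<open>(I + t W) X (I + t W)\<^sup>T\<close> show that \<open>W X + X W\<^sup>T\<close> is tangent at \<open>X\<close>, and
  \<open>\<langle>A\<^sub>i, W X + X W\<^sup>T\<rangle> = 2 \<langle>A\<^sub>i X, W\<rangle>\<close>, so independence of the \<open>A\<^sub>i X\<close> lets a tangent
  vector match any prescribed values \<open>\<langle>A\<^sub>i, Z\<rangle>\<close>. Conversely, every tangent vector \<open>T\<close>
  satisfies \<open>w\<^sup>T T w' = 0\<close> for \<open>w, w'\<close> in the kernel of \<open>X\<close>: a kernel vector of \<open>X\<close> lies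
  within \<open>O(\<parallel>G - X\<parallel>)\<close> of the kernel of every nearby symmetric \<open>G\<close> of the same rank, which
  makes \<open>w\<^sup>T G w'\<close> quadratically small along the curve. Hence \<open>T\<close> is orthogonal to every
  symmetric \<open>S\<close> with \<open>S X = 0\<close>, and a decomposition \<open>S = T + K\<close> with \<open>K \<perp> A\<^sub>i\<close> forces
  \<open>S = 0\<close>.
\<close>

lemma frob_eq_inner: "frob U V = U \<bullet> V"
  by (simp add: frob_def trace_def transpose_def matrix_matrix_mult_def inner_vec_def)
    (subst sum.swap, simp)

lemma frob_mult_right: "frob (A ** B) C = frob A (C ** transpose B)"
  unfolding frob_def matrix_transpose_mul
  by (metis matrix_mul_assoc trace_mul_sym)

lemma frob_mult_left: "frob (B ** A) C = frob A (transpose B ** C)"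
  unfolding frob_def matrix_transpose_mul
  by (metis matrix_mul_assoc)

lemma frob_transpose: "frob (transpose U) (transpose V) = frob U V"
  by (simp add: frob_eq_inner inner_vec_def transpose_def) (subst sum.swap, simp)

lemma transpose_add: "transpose (A + B) = transpose A + transpose B"
  by (simp add: transpose_def vec_eq_iff)

lemma transpose_diff: "transpose (A - B) = transpose A - transpose B"
  by (simp add: transpose_def vec_eq_iff)

lemma transpose_sum: "transpose (\<Sum>i\<in>I. f i) = (\<Sum>i\<in>I. transpose (f i :: real^'n^'m))"
  by (induct I rule: infinite_finite_induct) (auto simp: transpose_add transpose_def vec_eq_iff)

lemma matrix_add_rdistrib: "(A + B) ** C = A ** C + B ** (C :: real^'p^'n)"
  by (simp add: matrix_matrix_mult_def vec_eq_iff sum.distrib algebra_simps)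

lemma sum_matrix_mult: "(\<Sum>i\<in>I. f i) ** (X :: real^'p^'n) = (\<Sum>i\<in>I. f i ** X)"
  by (induct I rule: infinite_finite_induct) (auto simp: matrix_add_rdistrib)

lemma sum_matrix_vector_mult: "(\<Sum>i\<in>I. f i) *v x = (\<Sum>i\<in>I. f i *v (x :: real^'n))"
  by (induct I rule: infinite_finite_induct) (auto simp: matrix_vector_mult_add_rdistrib)

lemma inner_symmetric_matrix_vector:
  fixes G :: "real^'n^'n"
  assumes "transpose G = G"
  shows "x \<bullet> (G *v y) = (G *v x) \<bullet> y"
  by (metis assms dot_lmul_matrix transpose_matrix_vector)

lemma norm_matrix_vector_mult_le: "norm (M *v x) \<le> norm M * norm x"
  for M :: "real^'n^'m"
proof -
  have "(norm (M *v x))\<^sup>2 = (\<Sum>i\<in>UNIV. (M$i \<bullet> x)\<^sup>2)"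
    unfolding power2_norm_eq_inner inner_vec_def matrix_vector_mul_component
    by (simp add: power2_eq_square)
  also have "\<dots> \<le> (\<Sum>i\<in>UNIV. (norm (M$i))\<^sup>2 * (norm x)\<^sup>2)"
  proof (rule sum_mono)
    fix i
    have "\<bar>M$i \<bullet> x\<bar> \<le> norm (M$i) * norm x"
      by (rule Cauchy_Schwarz_ineq2)
    then have "\<bar>M$i \<bullet> x\<bar>\<^sup>2 \<le> (norm (M$i) * norm x)\<^sup>2"
      by (rule power_mono) simp
    then show "(M$i \<bullet> x)\<^sup>2 \<le> (norm (M$i))\<^sup>2 * (norm x)\<^sup>2"
      by (simp add: power_mult_distrib)
  qed
  also have "\<dots> = (\<Sum>i\<in>UNIV. (norm (M$i))\<^sup>2) * (norm x)\<^sup>2"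
    by (simp add: sum_distrib_right)
  also have "(\<Sum>i\<in>UNIV. (norm (M$i))\<^sup>2) = (norm M)\<^sup>2"
    unfolding power2_norm_eq_inner inner_vec_def by simp
  also have "(norm M)\<^sup>2 * (norm x)\<^sup>2 = (norm M * norm x)\<^sup>2"
    by (simp add: power_mult_distrib)
  finally show ?thesis
    by (meson mult_nonneg_nonneg norm_ge_zero power2_le_imp_le)
qed

lemma dim_null_space_add_rank: "dim {x. M *v x = 0} + rank M = CARD('n)"
  for M :: "real^'n^'m"
proof -
  have null_space: "{y \<in> UNIV. \<forall>x\<in>span (rows M). orthogonal x y} = {x. M *v x = 0}"
  proof (intro set_eqI iffI)
    fix y assume "y \<in> {y \<in> UNIV. \<forall>x\<in>span (rows M). orthogonal x y}"
    then have "\<forall>i. orthogonal (row i M) y"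
      by (auto simp: rows_def intro: span_base)
    then show "y \<in> {x. M *v x = 0}"
      by (simp add: vec_eq_iff matrix_vector_mul_component orthogonal_def row_def)
  next
    fix y assume "y \<in> {x. M *v x = 0}"
    then show "y \<in> {y \<in> UNIV. \<forall>x\<in>span (rows M). orthogonal x y}"
      using orthogonal_nullspace_rowspace[of M y] orthogonal_commute by blast
  qed
  have "dim {y \<in> UNIV. \<forall>x\<in>span (rows M). orthogonal x y} + dim (span (rows M))
      = dim (UNIV :: (real^'n) set)"
    by (rule dim_subspace_orthogonal_to_vectors) auto
  then show ?thesis
    unfolding null_space by (simp add: row_rank_def)
qed

lemma subspace_null_space: "subspace {x. M *v x = 0}"
  for M :: "real^'n^'m"
  by (auto simp: subspace_def matrix_vector_right_distrib matrix_vector_mult_scaleR)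

lemma rank_less_of_null_space_psubset:
  fixes M N :: "real^'n^'m"
  assumes "{x. M *v x = 0} \<subset> {x. N *v x = 0}"
  shows "rank N < rank M"
proof -
  have "span {x. M *v x = 0} \<subset> span {x. N *v x = 0}"
    using assms subspace_null_space[of M] subspace_null_space[of N] by (metis span_eq_iff)
  then have "dim {x. M *v x = 0} < dim {x. N *v x = 0}"
    by (rule dim_psubset)
  then show ?thesis
    using dim_null_space_add_rank[of M] dim_null_space_add_rank[of N] by linarith
qed

lemma null_space_eq_of_subset_rank_eq:
  fixes M N :: "real^'n^'m"
  assumes subset: "{x. M *v x = 0} \<subseteq> {x. N *v x = 0}" and rank: "rank N = rank M"
  shows "{x. M *v x = 0} = {x. N *v x = 0}"
proof (rule ccontr)
  assume "{x. M *v x = 0} \<noteq> {x. N *v x = 0}"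
  then have "rank N < rank M"
    using subset by (intro rank_less_of_null_space_psubset) blast
  then show False
    using rank by simp
qed

lemma rank_mult_invertible_left:
  fixes P A :: "real^'n^'n"
  assumes "invertible P"
  shows "rank (P ** A) = rank A"
proof -
  obtain P' where "P' ** P = mat 1" using assms invertible_def by blast
  then have "A = P' ** (P ** A)" by (simp add: matrix_mul_assoc)
  then show ?thesis by (metis rank_mul_le_right le_antisym)
qed

lemma rank_mult_invertible_right:
  fixes Q A :: "real^'n^'n"
  assumes "invertible Q"
  shows "rank (A ** Q) = rank A"
  using rank_mult_invertible_left[OF transpose_invertible[OF assms], of "transpose A"]
  by (metis matrix_transpose_mul rank_transpose)

lemma norm_matrix_vector_mult_add_ge:
  fixes M E :: "real^'n^'m"
  assumes "c * norm v \<le> norm (M *v v)"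
  shows "(c - norm E) * norm v \<le> norm ((M + E) *v v)"
proof -
  have "norm (M *v v) \<le> norm ((M + E) *v v) + norm (E *v v)"
    by (metis matrix_vector_mult_add_rdistrib add_diff_cancel_right' norm_triangle_ineq4)
  then show ?thesis
    using assms norm_matrix_vector_mult_le[of E v] by (simp add: algebra_simps)
qed

lemma invertible_of_bounded_below:
  fixes M :: "real^'n^'n"
  assumes "c > 0" and "\<And>v. c * norm v \<le> norm (M *v v)"
  shows "invertible M"
proof -
  have "inj ((*v) M)"
  proof (rule injI)
    fix u v assume "M *v u = M *v v"
    then have "c * norm (u - v) \<le> 0"
      using assms(2)[of "u - v"] by (simp add: matrix_vector_mult_diff_distrib)
    then show "u = v" using assms(1) by (simp add: mult_le_0_iff)
  qed
  then show ?thesis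
    using invertible_left_inverse matrix_left_invertible_injective by blast
qed

section \<open>Gram matrices and positive semidefinite factorization\<close>

definition outer :: "real^'n \<Rightarrow> real^'n \<Rightarrow> real^'n^'n" where
  "outer u v = (\<chi> a c. u$a * v$c)"

lemma outer_mult_vec: "outer u v *v x = (v \<bullet> x) *\<^sub>R u"
  by (simp add: outer_def vec_eq_iff matrix_vector_mult_def inner_vec_def sum_distrib_left
      algebra_simps)

lemma transpose_outer: "transpose (outer u v) = outer v u"
  by (simp add: outer_def transpose_def vec_eq_iff mult.commute)

lemma YYt_eq_sum_outer: "YYt p Y = (\<Sum>j<p. outer (Y j) (Y j))"
  by (simp add: YYt_def outer_def)

lemma YYt_mult_vec: "YYt p Y *v x = (\<Sum>j<p. (Y j \<bullet> x) *\<^sub>R Y j)"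
  by (simp add: YYt_eq_sum_outer sum_matrix_vector_mult outer_mult_vec)

lemma transpose_YYt: "transpose (YYt p Y) = YYt p Y"
  by (simp add: YYt_eq_sum_outer transpose_sum transpose_outer)

lemma inner_YYt_mult_vec: "v \<bullet> (YYt p Y *v v) = (\<Sum>j<p. (Y j \<bullet> v)\<^sup>2)"
  by (simp add: YYt_mult_vec inner_sum_right power2_eq_square inner_commute)

lemma psd_YYt: "psd (YYt p Y)"
  by (simp add: psd_def sym_mat_def transpose_YYt inner_YYt_mult_vec sum_nonneg)

lemma matrix_mult_YYt_eq_0_iff: "M ** YYt p Y = 0 \<longleftrightarrow> (\<forall>j<p. M *v Y j = 0)"
  for M :: "real^'n^'n"
proof
  assume MX: "M ** YYt p Y = 0"
  have squares: "(\<Sum>j<p. ((M *v Y j) \<bullet> v)\<^sup>2) = 0" for v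
  proof -
    have "Y j \<bullet> (v v* M) = (M *v Y j) \<bullet> v" for j
      by (metis dot_lmul_matrix inner_commute)
    then have "(\<Sum>j<p. ((M *v Y j) \<bullet> v)\<^sup>2) = (v v* M) \<bullet> (YYt p Y *v (v v* M))"
      by (simp add: inner_YYt_mult_vec)
    also have "\<dots> = v \<bullet> ((M ** YYt p Y) *v (v v* M))"
      by (simp add: dot_lmul_matrix matrix_vector_mul_assoc)
    finally show ?thesis by (simp add: MX)
  qed
  show "\<forall>j<p. M *v Y j = 0"
  proof (intro allI impI)
    fix j assume "j < p"
    then have "((M *v Y j) \<bullet> (M *v Y j))\<^sup>2 = 0"
      using squares[of "M *v Y j"] by (simp add: sum_nonneg_eq_0_iff)
    then show "M *v Y j = 0" by simp
  qed
next
  assume "\<forall>j<p. M *v Y j = 0"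
  then show "M ** YYt p Y = 0"
    by (simp add: matrix_eq matrix_vector_mul_assoc[symmetric] YYt_mult_vec
        linear_sum[OF matrix_vector_mul_linear] matrix_vector_mult_scaleR)
qed

lemma quadratic_nonneg_discriminant:
  fixes a b c :: real
  assumes "a \<ge> 0" and nonneg: "\<And>s. 0 \<le> a * s\<^sup>2 + 2 * b * s + c"
  shows "b\<^sup>2 \<le> a * c"
proof (cases "a = 0")
  case True
  have "b = 0"
  proof (rule ccontr)
    assume "b \<noteq> 0"
    then have "2 * b * (- (\<bar>c\<bar> + 1) / (2 * b)) = - (\<bar>c\<bar> + 1)" by simp
    then show False
      using nonneg[of "- (\<bar>c\<bar> + 1) / (2 * b)"] True abs_ge_self[of c] by simp
  qed
  then show ?thesis using True by simp
next
  case False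
  then have "a > 0" using assms(1) by simp
  then show ?thesis
    using nonneg[of "- b / a"] by (simp add: field_simps power2_eq_square)
qed

lemma psd_Cauchy_Schwarz:
  assumes "psd X"
  shows "(u \<bullet> (X *v v))\<^sup>2 \<le> (u \<bullet> (X *v u)) * (v \<bullet> (X *v v))"
proof -
  have symX: "transpose X = X" using assms by (simp add: psd_def sym_mat_def)
  have "0 \<le> (v \<bullet> (X *v v)) * s\<^sup>2 + 2 * (u \<bullet> (X *v v)) * s + u \<bullet> (X *v u)" for s
  proof -
    have "0 \<le> (u + s *\<^sub>R v) \<bullet> (X *v (u + s *\<^sub>R v))"
      using assms by (simp add: psd_def)
    also have "\<dots> = (v \<bullet> (X *v v)) * s\<^sup>2 + 2 * (u \<bullet> (X *v v)) * s + u \<bullet> (X *v u)"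
      using inner_symmetric_matrix_vector[OF symX, of v u]
      by (simp add: algebra_simps power2_eq_square inner_commute)
    finally show ?thesis .
  qed
  then show ?thesis
    using quadratic_nonneg_discriminant[of "v \<bullet> (X *v v)"] assms
    by (simp add: psd_def mult.commute)
qed

lemma psd_inner_pos:
  assumes psdX: "psd X" and Xu: "X *v u \<noteq> 0"
  shows "u \<bullet> (X *v u) > 0"
proof -
  have symX: "transpose X = X" using psdX by (simp add: psd_def sym_mat_def)
  have "u \<bullet> (X *v u) \<noteq> 0"
  proof
    assume "u \<bullet> (X *v u) = 0"
    then have "(u \<bullet> (X *v (X *v u)))\<^sup>2 \<le> 0"
      using psd_Cauchy_Schwarz[OF psdX, of u "X *v u"] by simp
    then show False
      using Xu inner_symmetric_matrix_vector[OF symX, of u "X *v u"] by simp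
  qed
  then show ?thesis
    using psdX by (simp add: psd_def order_less_le)
qed

lemma psd_rank_one_deflation:
  assumes psdX: "psd X" and Xu: "X *v u \<noteq> 0"
  obtains y where "psd (X - outer y y)" and "rank (X - outer y y) < rank X"
proof -
  have symX: "transpose X = X" using psdX by (simp add: psd_def sym_mat_def)
  define \<alpha> where "\<alpha> = u \<bullet> (X *v u)"
  have \<alpha>_pos: "\<alpha> > 0"
    unfolding \<alpha>_def by (rule psd_inner_pos[OF psdX Xu])
  define y where "y = (1 / sqrt \<alpha>) *\<^sub>R (X *v u)"
  have y_inner: "y \<bullet> v = (u \<bullet> (X *v v)) / sqrt \<alpha>" for v
    using inner_symmetric_matrix_vector[OF symX, of u v] by (simp add: y_def inner_commute)
  have deflated: "(X - outer y y) *v v = X *v v - (y \<bullet> v) *\<^sub>R y" for v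
    by (simp add: matrix_vector_mult_diff_rdistrib outer_mult_vec)
  have "psd (X - outer y y)"
    unfolding psd_def sym_mat_def
  proof (intro conjI allI)
    show "transpose (X - outer y y) = X - outer y y"
      by (simp add: transpose_diff symX transpose_outer)
    fix v
    have "(u \<bullet> (X *v v))\<^sup>2 / \<alpha> \<le> v \<bullet> (X *v v)"
      using psd_Cauchy_Schwarz[OF psdX, of u v] \<alpha>_pos by (simp add: \<alpha>_def field_simps)
    moreover have "v \<bullet> ((X - outer y y) *v v) = v \<bullet> (X *v v) - (u \<bullet> (X *v v))\<^sup>2 / \<alpha>"
      using \<alpha>_pos
      by (simp add: deflated inner_diff_right inner_commute[of v y] y_inner power2_eq_square)
    ultimately show "0 \<le> v \<bullet> ((X - outer y y) *v v)" by simp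
  qed
  moreover have "rank (X - outer y y) < rank X"
  proof (rule rank_less_of_null_space_psubset)
    have "y \<bullet> u = sqrt \<alpha>"
      using \<alpha>_pos by (simp add: y_inner \<alpha>_def real_div_sqrt)
    then have "(y \<bullet> u) *\<^sub>R y = X *v u"
      using \<alpha>_pos by (simp add: y_def)
    then have "(X - outer y y) *v u = 0"
      by (simp add: deflated)
    moreover have "X *v v = 0 \<Longrightarrow> (X - outer y y) *v v = 0" for v
      by (simp add: deflated y_inner inner_symmetric_matrix_vector[OF symX])
    ultimately show "{v. X *v v = 0} \<subset> {v. (X - outer y y) *v v = 0}"
      using Xu by blast
  qed
  ultimately show ?thesis by (rule that)
qed

lemma psd_imp_YYt:
  assumes "psd X"
  shows "\<exists>p Y. X = YYt p Y \<and> (\<forall>j\<ge>p. Y j = 0)"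
  using assms
proof (induction "rank X" arbitrary: X rule: less_induct)
  case less
  show ?case
  proof (cases "X = 0")
    case True
    then show ?thesis by (intro exI[of _ 0] exI[of _ "\<lambda>_. 0"]) (simp add: YYt_def)
  next
    case False
    then obtain u where "X *v u \<noteq> 0" by (metis matrix_eq matrix_vector_mult_0)
    then obtain y where "psd (X - outer y y)" and "rank (X - outer y y) < rank X"
      using psd_rank_one_deflation less.prems by blast
    then obtain p Y where Y: "X - outer y y = YYt p Y" and Y0: "\<forall>j\<ge>p. Y j = 0"
      using less.hyps by blast
    have "X = YYt (Suc p) (Y(p := y))"
      using Y by (simp add: YYt_eq_sum_outer algebra_simps)
    moreover have "\<forall>j\<ge>Suc p. (Y(p := y)) j = 0" using Y0 by simp
    ultimately show ?thesis by blast
  qed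
qed

section \<open>Tangent vectors to the manifold of fixed-rank symmetric matrices\<close>

lemma frob_congruence:
  fixes A X W :: "real^'n^'n"
  assumes symA: "transpose A = A" and symX: "transpose X = X"
  shows "frob A (W ** X + X ** transpose W) = 2 * ((A ** X) \<bullet> W)"
proof -
  have "frob A (X ** transpose W) = frob A (W ** X)"
    using frob_transpose[of A "W ** X"] by (simp add: symA symX matrix_transpose_mul)
  moreover have "frob A (W ** X) = frob (A ** X) W"
    by (simp add: frob_mult_right symX)
  ultimately show ?thesis
    by (simp add: frob_eq_inner inner_add_right)
qed

lemma tangent_space_symmetric: "T \<in> tangent_space X \<Longrightarrow> transpose X = X"
  by (force simp: tangent_space_def sym_rank_def sym_mat_def)

lemma congruence_in_tangent_space:
  fixes X W :: "real^'n^'n"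
  assumes symX: "transpose X = X"
  shows "W ** X + X ** transpose W \<in> tangent_space X"
proof -
  define \<gamma> where "\<gamma> t = (mat 1 + t *\<^sub>R W) ** X ** transpose (mat 1 + t *\<^sub>R W)" for t
  have "\<gamma> = (\<lambda>t. X + t *\<^sub>R (W ** X + X ** transpose W) + t\<^sup>2 *\<^sub>R (W ** X ** transpose W))"
    by (simp add: fun_eq_iff \<gamma>_def transpose_add transpose_scalar matrix_add_ldistrib
        matrix_add_rdistrib scalar_matrix_assoc[symmetric] matrix_scalar_ac matrix_mul_assoc
        power2_eq_square algebra_simps)
  then have "(\<gamma> has_vector_derivative W ** X + X ** transpose W) (at 0)"
    by (auto intro!: derivative_eq_intros)
  moreover have "\<gamma> t \<in> sym_rank (rank X)" if t: "\<bar>t\<bar> < 1 / (norm W + 1)" for t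
  proof -
    have "\<bar>t\<bar> * (norm W + 1) < 1"
      using t by (simp add: less_divide_eq add_nonneg_pos)
    then have "\<bar>t\<bar> * norm W < 1"
      by (simp add: algebra_simps)
    then have "(1 - norm (t *\<^sub>R W)) * norm v \<le> norm ((mat 1 + t *\<^sub>R W) *v v)" for v
      using norm_matrix_vector_mult_add_ge[of 1 v "mat 1" "t *\<^sub>R W"] by simp
    then have inv: "invertible (mat 1 + t *\<^sub>R W)"
      using \<open>\<bar>t\<bar> * norm W < 1\<close> by (intro invertible_of_bounded_below) auto
    then have "rank (\<gamma> t) = rank X"
      by (simp add: \<gamma>_def rank_mult_invertible_left rank_mult_invertible_right transpose_invertible)
    moreover have "transpose (\<gamma> t) = \<gamma> t"
      by (simp add: \<gamma>_def matrix_transpose_mul symX matrix_mul_assoc)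
    ultimately show ?thesis by (simp add: sym_rank_def sym_mat_def)
  qed
  moreover have "\<gamma> 0 = X" by (simp add: \<gamma>_def)
  moreover have "1 / (norm W + 1) > 0" by (simp add: add_nonneg_pos)
  ultimately show ?thesis
    unfolding tangent_space_def by blast
qed

lemma orthogonal_projection_symmetric:
  fixes P :: "real^'n^'n"
  assumes perp: "\<And>u w. w \<in> span B \<Longrightarrow> (P *v u) \<bullet> w = 0"
    and span: "\<And>u. u - P *v u \<in> span B"
  shows "transpose P = P"
proof -
  have P_inner: "(P *v u) \<bullet> v = (P *v u) \<bullet> (P *v v)" for u v
    using perp[OF span, of u v] by (simp add: inner_diff_right)
  have "(transpose P *v u) \<bullet> v = (P *v u) \<bullet> v" for u v
  proof -
    have "(transpose P *v u) \<bullet> v = u \<bullet> (P *v v)"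
      by (simp add: dot_lmul_matrix)
    also have "\<dots> = (P *v v) \<bullet> (P *v u)"
      using P_inner[of v u] by (simp add: inner_commute)
    also have "\<dots> = (P *v u) \<bullet> v"
      using P_inner[of u v] by (simp add: inner_commute)
    finally show ?thesis .
  qed
  then have orth: "(transpose P *v u - P *v u) \<bullet> v = 0" for u v
    by (simp add: inner_diff_left)
  have "transpose P *v u = P *v u" for u
    using orth[of u "transpose P *v u - P *v u"] by simp
  then show ?thesis
    by (simp add: matrix_eq)
qed

lemma orthogonal_projection_matrix:
  fixes B :: "(real^'n) set"
  obtains P :: "real^'n^'n"
  where "transpose P = P" and "\<And>u w. w \<in> span B \<Longrightarrow> (P *v u) \<bullet> w = 0"
    and "\<And>u. u - P *v u \<in> span B"
proof -
  have "\<forall>c. \<exists>z. (\<forall>w\<in>span B. z \<bullet> w = 0) \<and> axis c 1 - z \<in> span B"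
  proof
    fix c :: 'n
    obtain y z where "y \<in> span B" "\<And>w. w \<in> span B \<Longrightarrow> orthogonal z w" "axis c 1 = y + z"
      using orthogonal_subspace_decomp_exists[of B "axis c (1::real)"] by metis
    then show "\<exists>z. (\<forall>w\<in>span B. z \<bullet> w = 0) \<and> axis c 1 - z \<in> span B"
      by (intro exI[of _ z]) (auto simp: orthogonal_def)
  qed
  then obtain z where z_perp: "\<And>c w. w \<in> span B \<Longrightarrow> z c \<bullet> w = 0"
    and z_span: "\<And>c. axis c 1 - z c \<in> span B"
    by metis
  define P :: "real^'n^'n" where "P = (\<chi> a c. z c $ a)"
  have P_mult: "P *v u = (\<Sum>c\<in>UNIV. u$c *\<^sub>R z c)" for u
    by (simp add: P_def vec_eq_iff matrix_vector_mult_def mult.commute)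
  have perp: "(P *v u) \<bullet> w = 0" if "w \<in> span B" for u w
    using z_perp[OF that] by (simp add: P_mult inner_sum_left)
  have span: "u - P *v u \<in> span B" for u
  proof -
    have "u - P *v u = (\<Sum>c\<in>UNIV. u$c *\<^sub>R (axis c 1 - z c))"
      using basis_expansion[of u]
      by (simp add: P_mult scalar_mult_eq_scaleR scaleR_right_diff_distrib sum_subtractf)
    also have "\<dots> \<in> span B" by (intro span_sum span_mul z_span)
    finally show ?thesis .
  qed
  show ?thesis
    by (rule that[OF orthogonal_projection_symmetric[OF perp span] perp span])
qed

lemma symmetric_null_space_projection:
  fixes X :: "real^'n^'n"
  assumes symX: "transpose X = X"
  obtains P :: "real^'n^'n"
  where "transpose P = P" and "\<And>u. X *v (P *v u) = 0"
    and "\<And>u. u - P *v u \<in> span (range ((*v) X))"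
proof -
  obtain P where symP: "transpose P = P"
    and perp: "\<And>u w. w \<in> span (range ((*v) X)) \<Longrightarrow> (P *v u) \<bullet> w = 0"
    and span: "\<And>u. u - P *v u \<in> span (range ((*v) X))"
    using orthogonal_projection_matrix by blast
  have "X *v (P *v u) = 0" for u
  proof -
    have "(X *v (P *v u)) \<bullet> w = 0" for w
      using perp[of "X *v w" u] inner_symmetric_matrix_vector[OF symX, of "P *v u" w]
      by (simp add: span_base inner_commute)
    from this[of "X *v (P *v u)"] show ?thesis by simp
  qed
  then show ?thesis using that symP span by blast
qed

lemma inj_add_null_space_projection:
  fixes X P :: "real^'n^'n"
  assumes symX: "transpose X = X" and null: "\<And>u. X *v (P *v u) = 0"
    and span: "\<And>u. u - P *v u \<in> span (range ((*v) X))"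
  shows "inj ((*v) (X + P))"
proof -
  have perp: "z \<bullet> w = 0" if "X *v z = 0" and "w \<in> span (range ((*v) X))" for z w
  proof (rule linear_eq_0_on_span[of "(\<bullet>) z"])
    show "linear ((\<bullet>) z)"
      by (simp add: bounded_linear_inner_right bounded_linear.linear)
    show "z \<bullet> x = 0" if "x \<in> range ((*v) X)" for x
      using that \<open>X *v z = 0\<close> inner_symmetric_matrix_vector[OF symX, of z] by auto
  qed (rule that(2))
  have "v = 0" if "(X + P) *v v = 0" for v
  proof -
    have Xv: "X *v v = - (P *v v)"
      using that by (simp add: matrix_vector_mult_add_rdistrib eq_neg_iff_add_eq_0)
    have "(X *v v) \<bullet> (X *v v) = - ((P *v v) \<bullet> (X *v v))"
      by (simp add: Xv)
    also have "\<dots> = 0"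
      using perp[OF null[of v], of "X *v v"] by (simp add: span_base)
    finally have "X *v v = 0" by simp
    then have "v \<in> span (range ((*v) X))"
      using span[of v] Xv by simp
    then show "v = 0"
      using perp[OF \<open>X *v v = 0\<close>, of v] by simp
  qed
  then show ?thesis
    by (intro injI) (metis eq_iff_diff_eq_0 matrix_vector_mult_diff_distrib)
qed

lemma null_vector_near_of_rank_eq:
  fixes X P G :: "real^'n^'n"
  assumes null: "\<And>u. X *v (P *v u) = 0"
    and c: "c > 0" and bounded_below: "\<And>v. c * norm v \<le> norm ((G + P) *v v)"
    and rank: "rank G = rank X" and w: "X *v w = 0"
  obtains x where "G *v x = 0" and "c * norm (x - w) \<le> norm (G - X) * norm w"
proof -
  obtain M where "(G + P) ** M = mat 1"
    using invertible_of_bounded_below[OF c bounded_below] invertible_def by blast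
  define x where "x = M *v (P *v w)"
  have x: "(G + P) *v x = P *v w"
    unfolding x_def matrix_vector_mul_assoc[of "G + P" M] \<open>(G + P) ** M = mat 1\<close> by simp
  have "{v. G *v v = 0} = {v. (X ** (G + P)) *v v = 0}"
  proof (rule null_space_eq_of_subset_rank_eq)
    show "{v. G *v v = 0} \<subseteq> {v. (X ** (G + P)) *v v = 0}"
      by (auto simp: matrix_vector_mul_assoc[symmetric] matrix_vector_mult_add_rdistrib null)
    show "rank (X ** (G + P)) = rank G"
      using rank invertible_of_bounded_below[OF c bounded_below]
      by (simp add: rank_mult_invertible_right)
  qed
  moreover have "x \<in> {v. (X ** (G + P)) *v v = 0}"
    by (simp add: matrix_vector_mul_assoc[symmetric] x null)
  ultimately have "G *v x = 0"
    by blast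
  have "(G + P) *v (x - w) = P *v w - (G *v w + P *v w)"
    unfolding matrix_vector_mult_diff_distrib x by (simp add: matrix_vector_mult_add_rdistrib)
  also have "\<dots> = - ((G - X) *v w)"
    by (simp add: matrix_vector_mult_diff_rdistrib w)
  finally have "c * norm (x - w) \<le> norm (G - X) * norm w"
    using bounded_below[of "x - w"] norm_matrix_vector_mult_le[of "G - X" w] by simp
  with \<open>G *v x = 0\<close> show ?thesis
    by (rule that)
qed

lemma rank_preserving_perturbation_null_vector:
  fixes X :: "real^'n^'n"
  assumes symX: "transpose X = X"
  obtains \<delta> C where "\<delta> > 0"
    and "\<And>G w. rank G = rank X \<Longrightarrow> norm (G - X) < \<delta> \<Longrightarrow> X *v w = 0 \<Longrightarrow>
           \<exists>x. G *v x = 0 \<and> norm (x - w) \<le> C * norm (G - X) * norm w"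
proof -
  obtain P where null: "\<And>u. X *v (P *v u) = 0"
    and span: "\<And>u. u - P *v u \<in> span (range ((*v) X))"
    using symmetric_null_space_projection[OF symX] by blast
  have "linear ((*v) (X + P))" and "inj ((*v) (X + P))"
    using inj_add_null_space_projection[OF symX null span] by (auto simp: eta_contract_eq)
  then obtain c where c: "c > 0" and bounded_below: "\<And>v. c * norm v \<le> norm ((X + P) *v v)"
    using linear_inj_bounded_below_pos by blast
  show ?thesis
  proof (rule that[of "c / 2" "2 / c"])
    fix G w assume rank: "rank G = rank X" and close: "norm (G - X) < c / 2" and w: "X *v w = 0"
    have bounded_below_G: "c / 2 * norm v \<le> norm ((G + P) *v v)" for v
    proof -
      have "c / 2 * norm v \<le> (c - norm (G - X)) * norm v"
        using close by (intro mult_right_mono) auto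
      also have "\<dots> \<le> norm ((G + P) *v v)"
        using norm_matrix_vector_mult_add_ge[of c v "X + P" "G - X"] bounded_below[of v]
        by (simp add: algebra_simps)
      finally show ?thesis .
    qed
    have "c / 2 > 0"
      using c by simp
    then obtain x where "G *v x = 0" and "c / 2 * norm (x - w) \<le> norm (G - X) * norm w"
      by (rule null_vector_near_of_rank_eq[OF null _ bounded_below_G rank w])
    moreover from this(2) have "norm (x - w) \<le> 2 / c * norm (G - X) * norm w"
      using c by (simp add: field_simps)
    ultimately show "\<exists>x. G *v x = 0 \<and> norm (x - w) \<le> 2 / c * norm (G - X) * norm w"
      by blast
  qed (use c in simp)
qed

lemma null_form_perturbation_bound:
  fixes G X :: "real^'n^'n"
  assumes symG: "transpose G = G" and "G *v x = 0" and "X *v w' = 0"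
  shows "\<bar>w \<bullet> ((G - X) *v w')\<bar> \<le> norm (w - x) * norm (G - X) * norm w'"
proof -
  have "x \<bullet> (G *v w') = 0"
    using assms inner_symmetric_matrix_vector[OF symG, of x w'] by simp
  then have "w \<bullet> ((G - X) *v w') = (w - x) \<bullet> ((G - X) *v w')"
    using assms by (simp add: matrix_vector_mult_diff_rdistrib inner_diff_left)
  also have "\<bar>\<dots>\<bar> \<le> norm (w - x) * norm ((G - X) *v w')"
    by (rule Cauchy_Schwarz_ineq2)
  also have "\<dots> \<le> norm (w - x) * (norm (G - X) * norm w')"
    by (intro mult_left_mono norm_matrix_vector_mult_le) auto
  finally show ?thesis by (simp add: mult.assoc)
qed

lemma difference_quotient_tendsto:
  assumes "(\<gamma> has_vector_derivative T) (at 0)"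
  shows "((\<lambda>t. (1 / t) *\<^sub>R (\<gamma> t - \<gamma> 0)) \<longlongrightarrow> T) (at (0::real))"
proof -
  have "((\<lambda>t. norm (\<gamma> (0 + t) - \<gamma> 0 - t *\<^sub>R T) / norm t) \<longlongrightarrow> 0) (at 0)"
    using assms unfolding has_vector_derivative_def has_derivative_at by blast
  then have "((\<lambda>t. norm (\<gamma> t - \<gamma> 0 - t *\<^sub>R T) / norm t) \<longlongrightarrow> 0) (at 0)"
    by simp
  moreover have "\<forall>\<^sub>F t in at 0.
      norm ((1 / t) *\<^sub>R (\<gamma> t - \<gamma> 0) - T) \<le> norm (\<gamma> t - \<gamma> 0 - t *\<^sub>R T) / norm t"
  proof (rule eventually_at_filter[THEN iffD2], rule always_eventually, intro allI impI)
    fix t :: real assume "t \<noteq> 0"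
    then have "(1 / t) *\<^sub>R (\<gamma> t - \<gamma> 0) - T = (1 / t) *\<^sub>R (\<gamma> t - \<gamma> 0 - t *\<^sub>R T)"
      by (simp add: algebra_simps)
    then show "norm ((1 / t) *\<^sub>R (\<gamma> t - \<gamma> 0) - T) \<le> norm (\<gamma> t - \<gamma> 0 - t *\<^sub>R T) / norm t"
      by (simp add: divide_inverse mult.commute)
  qed
  ultimately have "((\<lambda>t. (1 / t) *\<^sub>R (\<gamma> t - \<gamma> 0) - T) \<longlongrightarrow> 0) (at 0)"
    by (rule Lim_null_comparison[rotated])
  then show ?thesis by (simp add: LIM_zero_iff)
qed

lemma bounded_linear_derivative_eq_0:
  fixes \<gamma> :: "real \<Rightarrow> 'a::real_normed_vector" and L :: "'a \<Rightarrow> real"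
  assumes der: "(\<gamma> has_vector_derivative T) (at 0)" and L: "bounded_linear L"
    and quadratic: "\<forall>\<^sub>F t in at 0. \<bar>L (\<gamma> t - \<gamma> 0)\<bar> \<le> K * (norm (\<gamma> t - \<gamma> 0))\<^sup>2"
  shows "L T = 0"
proof -
  define q where "q t = (1 / t) *\<^sub>R (\<gamma> t - \<gamma> 0)" for t
  have q: "(q \<longlongrightarrow> T) (at 0)"
    unfolding q_def by (rule difference_quotient_tendsto[OF der])
  have "(\<gamma> \<longlongrightarrow> \<gamma> 0) (at 0)"
    using has_vector_derivative_continuous[OF der] by (simp add: continuous_at)
  then have "((\<lambda>t. \<gamma> t - \<gamma> 0) \<longlongrightarrow> 0) (at 0)"
    by (simp add: LIM_zero)
  then have "((\<lambda>t. K * (norm (\<gamma> t - \<gamma> 0) * norm (q t))) \<longlongrightarrow> K * (norm (0::'a) * norm T)) (at 0)"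
    by (intro tendsto_intros q)
  then have majorant: "((\<lambda>t. K * (norm (\<gamma> t - \<gamma> 0) * norm (q t))) \<longlongrightarrow> 0) (at 0)"
    by simp
  have "norm (L (q t)) \<le> K * (norm (\<gamma> t - \<gamma> 0) * norm (q t))"
    if "\<bar>L (\<gamma> t - \<gamma> 0)\<bar> \<le> K * (norm (\<gamma> t - \<gamma> 0))\<^sup>2" for t
  proof -
    have "norm (L (q t)) = \<bar>L (\<gamma> t - \<gamma> 0)\<bar> / \<bar>t\<bar>"
      by (simp add: q_def linear_simps(5)[OF L] abs_mult)
    also have "\<dots> \<le> K * (norm (\<gamma> t - \<gamma> 0))\<^sup>2 / \<bar>t\<bar>"
      using that by (simp add: divide_right_mono)
    also have "\<dots> = K * (norm (\<gamma> t - \<gamma> 0) * norm (q t))"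
      by (simp add: q_def power2_eq_square)
    finally show ?thesis .
  qed
  then have "\<forall>\<^sub>F t in at 0. norm (L (q t)) \<le> K * (norm (\<gamma> t - \<gamma> 0) * norm (q t))"
    by (rule eventually_mono[OF quadratic])
  then have "((\<lambda>t. L (q t)) \<longlongrightarrow> 0) (at 0)"
    using majorant by (rule Lim_null_comparison)
  moreover have "((\<lambda>t. L (q t)) \<longlongrightarrow> L T) (at 0)"
    by (rule bounded_linear.tendsto[OF L q])
  ultimately show ?thesis
    using tendsto_unique[OF at_neq_bot] by blast
qed

lemma bounded_linear_matrix_vector_mult_left: "bounded_linear (\<lambda>M :: real^'n^'m. M *v v)"
  by (auto intro!: linear_conv_bounded_linear[THEN iffD1] linearI
      simp: matrix_vector_mult_add_rdistrib scaleR_matrix_vector_assoc)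

lemma tangent_space_null_form:
  fixes X T :: "real^'n^'n"
  assumes T: "T \<in> tangent_space X" and w: "X *v w = 0" and w': "X *v w' = 0"
  shows "w \<bullet> (T *v w') = 0"
proof -
  obtain \<gamma> e where "e > 0" and \<gamma>0: "\<gamma> 0 = X"
    and curve: "\<forall>t. \<bar>t\<bar> < e \<longrightarrow> \<gamma> t \<in> sym_rank (rank X)"
    and der: "(\<gamma> has_vector_derivative T) (at 0)"
    using T unfolding tangent_space_def by blast
  obtain \<delta> C where "\<delta> > 0"
    and near: "\<And>G w. rank G = rank X \<Longrightarrow> norm (G - X) < \<delta> \<Longrightarrow> X *v w = 0 \<Longrightarrow>
                 \<exists>x. G *v x = 0 \<and> norm (x - w) \<le> C * norm (G - X) * norm w"
    using rank_preserving_perturbation_null_vector[OF tangent_space_symmetric[OF T]] by blast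
  have "(\<gamma> \<longlongrightarrow> X) (at 0)"
    using has_vector_derivative_continuous[OF der] \<gamma>0 by (simp add: continuous_at)
  then have "\<forall>\<^sub>F t in at 0. norm (\<gamma> t - X) < \<delta>"
    using \<open>\<delta> > 0\<close> by (simp add: tendsto_iff dist_norm)
  moreover have "\<forall>\<^sub>F t in at 0. \<bar>t\<bar> < e"
    using \<open>e > 0\<close> by (auto simp: eventually_at intro!: exI[of _ e])
  ultimately have "\<forall>\<^sub>F t in at 0.
      \<bar>w \<bullet> ((\<gamma> t - \<gamma> 0) *v w')\<bar> \<le> (C * norm w * norm w') * (norm (\<gamma> t - \<gamma> 0))\<^sup>2"
  proof eventually_elim
    case (elim t)
    then have sym: "transpose (\<gamma> t) = \<gamma> t" and rank: "rank (\<gamma> t) = rank X"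
      using curve by (auto simp: sym_rank_def sym_mat_def)
    obtain x where x: "\<gamma> t *v x = 0" and close: "norm (w - x) \<le> C * norm (\<gamma> t - X) * norm w"
      using near[OF rank elim(1) w] by (auto simp: norm_minus_commute)
    have "\<bar>w \<bullet> ((\<gamma> t - X) *v w')\<bar> \<le> norm (w - x) * norm (\<gamma> t - X) * norm w'"
      by (rule null_form_perturbation_bound[OF sym x w'])
    also have "\<dots> \<le> C * norm (\<gamma> t - X) * norm w * norm (\<gamma> t - X) * norm w'"
      using close by (intro mult_right_mono) auto
    finally show ?case
      by (simp add: \<gamma>0 power2_eq_square mult_ac)
  qed
  then show ?thesis
    using bounded_linear_derivative_eq_0[OF der, of "\<lambda>M. w \<bullet> (M *v w')"]
    by (simp add: bounded_linear_compose[OF bounded_linear_inner_right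
          bounded_linear_matrix_vector_mult_left])
qed

lemma frob_tangent_space_eq_0:
  fixes S X T :: "real^'n^'n"
  assumes symS: "transpose S = S" and SX: "S ** X = 0" and T: "T \<in> tangent_space X"
  shows "frob S T = 0"
proof -
  obtain P where symP: "transpose P = P" and null: "\<And>u. X *v (P *v u) = 0"
    and span: "\<And>u. u - P *v u \<in> span (range ((*v) X))"
    using symmetric_null_space_projection[OF tangent_space_symmetric[OF T]] by blast
  have "P ** T ** P = 0"
  proof -
    have "v \<bullet> ((P ** T ** P) *v u) = 0" for u v
      using tangent_space_null_form[OF T null null, of v u]
      by (simp add: inner_symmetric_matrix_vector[OF symP] matrix_vector_mul_assoc[symmetric])
    then have "(P ** T ** P) *v u = 0" for u
      using inner_eq_zero_iff by blast
    then show ?thesis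
      by (simp add: matrix_eq)
  qed
  have "S *v (u - P *v u) = 0" for u
  proof (rule linear_eq_0_on_span[OF _ _ span])
    show "S *v x = 0" if "x \<in> range ((*v) X)" for x
      using that SX by (auto simp: matrix_vector_mul_assoc)
  qed (simp add: bounded_linear.linear)
  then have SP: "S ** P = S"
    by (simp add: matrix_eq matrix_vector_mul_assoc[symmetric] matrix_vector_mult_diff_distrib)
  then have PS: "P ** S = S"
    by (metis symP symS matrix_transpose_mul)
  have "frob S T = frob (P ** S ** P) T"
    by (simp add: PS SP)
  also have "\<dots> = frob (P ** S) (T ** P)"
    using frob_mult_right[of "P ** S" P T] by (simp add: symP)
  also have "\<dots> = frob S (P ** T ** P)"
    using frob_mult_left[of P S "T ** P"] by (simp add: symP matrix_mul_assoc)
  also have "\<dots> = 0"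
    by (simp add: \<open>P ** T ** P = 0\<close> frob_eq_inner)
  finally show ?thesis .
qed

section \<open>Nondegeneracy and Assumption 1(a)\<close>

lemma YYt_in_feasible_set: "Y \<in> Mp A m b p \<Longrightarrow> YYt p Y \<in> feasible_set A m b"
  by (simp add: Mp_def feasible_set_def psd_YYt)

lemma feasible_set_YYtE:
  assumes "X \<in> feasible_set A m b"
  obtains p Y where "p \<ge> 1" and "Y \<in> Mp A m b p" and "X = YYt p Y"
proof -
  obtain p Y where X: "X = YYt p Y" and Y0: "\<forall>j\<ge>p. Y j = 0"
    using psd_imp_YYt[of X] assms unfolding feasible_set_def by blast
  have "YYt (Suc p) Y = X"
    using X Y0 by (simp add: YYt_eq_sum_outer outer_def vec_eq_iff)
  then have "Y \<in> Mp A m b (Suc p)"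
    using assms Y0 by (simp add: Mp_def feasible_set_def)
  then show ?thesis
    using that[of "Suc p" Y] \<open>YYt (Suc p) Y = X\<close> by simp
qed

lemma ball_feasible_set_iff_YYt:
  "(\<forall>X\<in>feasible_set A m b. P X) \<longleftrightarrow> (\<forall>p\<ge>1. \<forall>Y\<in>Mp A m b p. P (YYt p Y))"
proof
  assume YYt: "\<forall>p\<ge>1. \<forall>Y\<in>Mp A m b p. P (YYt p Y)"
  show "\<forall>X\<in>feasible_set A m b. P X"
  proof
    fix X assume "X \<in> feasible_set A m b"
    then obtain p Y where "p \<ge> 1" "Y \<in> Mp A m b p" "X = YYt p Y"
      by (rule feasible_set_YYtE)
    with YYt show "P X" by simp
  qed
qed (simp add: YYt_in_feasible_set)

lemma assumption1a_iff_lin_indep: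
  "assumption1a A m b p \<longleftrightarrow> (\<forall>Y\<in>Mp A m b p. lin_indep_mats (\<lambda>i. A i ** YYt p Y) m)"
proof -
  have "(\<Sum>i<m. c i *\<^sub>R (A i ** YYt p Y)) = (\<Sum>i<m. c i *\<^sub>R A i) ** YYt p Y" for c Y
    by (simp add: sum_matrix_mult scalar_matrix_assoc)
  moreover have "(\<Sum>i<m. c i *\<^sub>R (A i *v y)) = (\<Sum>i<m. c i *\<^sub>R A i) *v y" for c y
    by (simp add: sum_matrix_vector_mult scaleR_matrix_vector_assoc)
  ultimately show ?thesis
    unfolding assumption1a_def lin_indep_mats_def by (simp add: matrix_mult_YYt_eq_0_iff)
qed

lemma lin_indep_inner_interpolation:
  fixes v :: "nat \<Rightarrow> 'a::euclidean_space"
  assumes li: "\<forall>c. (\<Sum>i<m. c i *\<^sub>R v i) = 0 \<longrightarrow> (\<forall>i<m. c i = 0)"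
  obtains w where "\<And>i. i < m \<Longrightarrow> v i \<bullet> w = \<beta> i"
proof -
  have inj: "inj_on v {..<m}"
  proof (rule inj_onI, rule ccontr)
    fix i j assume ij: "i \<in> {..<m}" "j \<in> {..<m}" "v i = v j" "i \<noteq> j"
    define c where "c k = (if k = i then 1 else 0) - (if k = j then 1 else (0::real))" for k
    have "c k *\<^sub>R v k = (if k = i then v k else 0) - (if k = j then v k else 0)" for k
      by (simp add: c_def scaleR_left_diff_distrib)
    then have "(\<Sum>k<m. c k *\<^sub>R v k) = v i - v j"
      using ij by (simp add: sum_subtractf)
    then have "c i = 0"
      using li[rule_format, of c i] ij by simp
    then show False
      using ij by (simp add: c_def)
  qed
  have indep: "independent (v ` {..<m})"
  proof (rule independent_if_scalars_zero)
    fix f x assume sum0: "(\<Sum>x\<in>v ` {..<m}. f x *\<^sub>R x) = 0" and "x \<in> v ` {..<m}"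
    then obtain k where k: "k < m" "x = v k" by blast
    have "(\<Sum>k<m. (f \<circ> v) k *\<^sub>R v k) = 0"
      using sum0 by (simp add: sum.reindex[OF inj])
    then show "f x = 0"
      using li[rule_format, of "f \<circ> v" k] k by simp
  qed simp
  obtain g where "linear g" and g: "\<forall>x\<in>v ` {..<m}. g x = \<beta> (the_inv_into {..<m} v x)"
    using linear_independent_extend[OF indep, of "\<lambda>x. \<beta> (the_inv_into {..<m} v x)"] by blast
  have "v i \<bullet> adjoint g 1 = \<beta> i" if "i < m" for i
    using adjoint_works[OF \<open>linear g\<close>, of "v i" 1] g the_inv_into_f_f[OF inj, of i] that by simp
  then show ?thesis by (rule that)
qed

lemma primal_nondegenerate_if_lin_indep:
  fixes A :: "nat \<Rightarrow> real^'n^'n"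
  assumes symA: "\<forall>i<m. sym_mat (A i)" and X: "X \<in> feasible_set A m b"
    and li: "lin_indep_mats (\<lambda>i. A i ** X) m"
  shows "primal_nondegenerate A m b X"
  unfolding primal_nondegenerate_def
proof (intro conjI allI impI)
  show "X \<in> feasible_set A m b" by (rule X)
  have symX: "transpose X = X"
    using X by (simp add: feasible_set_def psd_def sym_mat_def)
  fix Z :: "real^'n^'n" assume Z: "sym_mat Z"
  obtain W where W: "\<And>i. i < m \<Longrightarrow> (A i ** X) \<bullet> W = frob (A i) Z / 2"
    using lin_indep_inner_interpolation[where v = "\<lambda>i. A i ** X" and \<beta> = "\<lambda>i. frob (A i) Z / 2"] li
    unfolding lin_indep_mats_def by blast
  define T where "T = W ** X + X ** transpose W"
  have "T \<in> tangent_space X"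
    unfolding T_def by (rule congruence_in_tangent_space[OF symX])
  moreover have "sym_mat (Z - T)"
    using Z symX
    by (simp add: T_def sym_mat_def transpose_diff transpose_add matrix_transpose_mul add.commute)
  moreover have "frob (A i) (Z - T) = 0" if "i < m" for i
    using frob_congruence[of "A i" X W] symA symX W that
    by (simp add: T_def sym_mat_def frob_eq_inner inner_diff_right)
  ultimately show "\<exists>T K. T \<in> tangent_space X \<and> sym_mat K \<and> (\<forall>i<m. frob (A i) K = 0) \<and> Z = T + K"
    by (intro exI[of _ T] exI[of _ "Z - T"]) auto
qed

lemma lin_indep_if_primal_nondegenerate:
  fixes A :: "nat \<Rightarrow> real^'n^'n"
  assumes symA: "\<forall>i<m. sym_mat (A i)" and li: "lin_indep_mats A m"
    and nd: "primal_nondegenerate A m b X"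
  shows "lin_indep_mats (\<lambda>i. A i ** X) m"
  unfolding lin_indep_mats_def
proof (rule allI, rule impI)
  fix c assume "(\<Sum>i<m. c i *\<^sub>R (A i ** X)) = 0"
  define S where "S = (\<Sum>i<m. c i *\<^sub>R A i)"
  have SX: "S ** X = 0"
    using \<open>(\<Sum>i<m. c i *\<^sub>R (A i ** X)) = 0\<close>
    by (simp add: S_def sum_matrix_mult scalar_matrix_assoc)
  have symS: "transpose S = S"
    using symA by (simp add: S_def transpose_sum transpose_scalar sym_mat_def)
  obtain T K where T: "T \<in> tangent_space X" and K: "\<forall>i<m. frob (A i) K = 0" and S: "S = T + K"
    using nd symS unfolding primal_nondegenerate_def sym_mat_def by blast
  have "S \<bullet> S = frob S T + frob S K"
    by (simp only: frob_eq_inner flip: inner_add_right S)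
  also have "frob S T = 0"
    by (rule frob_tangent_space_eq_0[OF symS SX T])
  also have "frob S K = 0"
    using K by (simp add: S_def frob_eq_inner inner_sum_left)
  finally have "S = 0" by simp
  then show "\<forall>i<m. c i = 0"
    using li unfolding lin_indep_mats_def S_def by blast
qed

lemma primal_nondegenerate_iff_lin_indep:
  fixes A :: "nat \<Rightarrow> real^'n^'n"
  assumes symA: "\<forall>i<m. sym_mat (A i)" and li: "lin_indep_mats A m"
    and X: "X \<in> feasible_set A m b"
  shows "primal_nondegenerate A m b X \<longleftrightarrow> lin_indep_mats (\<lambda>i. A i ** X) m"
  using primal_nondegenerate_if_lin_indep[OF symA X] lin_indep_if_primal_nondegenerate[OF symA li]
  by blast

theorem proposition9:
  fixes A :: "nat \<Rightarrow> real^'n^'n" and m :: nat and b :: "nat \<Rightarrow> real"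
  assumes "\<forall>i<m. sym_mat (A i)"
    and "lin_indep_mats A m"
  shows "(\<forall>p\<ge>1. Mp A m b p \<noteq> {} \<longrightarrow> assumption1a A m b p) \<longleftrightarrow>
         (\<forall>X \<in> feasible_set A m b. primal_nondegenerate A m b X)"
proof -
  have "(\<forall>p\<ge>1. Mp A m b p \<noteq> {} \<longrightarrow> assumption1a A m b p) \<longleftrightarrow>
      (\<forall>p\<ge>1. \<forall>Y\<in>Mp A m b p. lin_indep_mats (\<lambda>i. A i ** YYt p Y) m)"
    by (auto simp: assumption1a_iff_lin_indep)
  also have "\<dots> \<longleftrightarrow> (\<forall>X\<in>feasible_set A m b. lin_indep_mats (\<lambda>i. A i ** X) m)"
    by (rule ball_feasible_set_iff_YYt[symmetric])
  also have "\<dots> \<longleftrightarrow> (\<forall>X\<in>feasible_set A m b. primal_nondegenerate A m b X)"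
    using primal_nondegenerate_iff_lin_indep[OF assms] by blast
  finally show ?thesis .
qed

end
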